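(* Let $1\le k<n$ be integers and $K=\{p\in[0,1]^n:\sum_i p_i=k\}$. There exists a sampling procedure which, given only sample access to $n$ coins of unknown biases $p=(p_1,\dots,p_n)\in K$ (independent Bernoulli($p_i$) flips of coin $i$, as many as desired) together with independent auxiliary coins of known biases, terminates almost surely for every $p\in K$ (including points on the boundary of $[0,1]^n$) and outputs a random subset $U\subseteq[n]$ with $|U|=k$ such that $\mathbb{P}[i\in U]=p_i$ for every $i\in[n]$. *)

theory Defs
  imports "HOL-Analysis.Analysis"
begin

text \<open>A sampling procedure with coin access is modelled as an adaptive strategy:
  given the history of all coin outcomes observed so far (a list of booleans), it
  decides either to flip unknown coin i, to flip an auxiliary coin of known bias q,
  or to stop and output a set.\<close>

datatype action = Flip nat | Aux real | Stop "nat set"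

type_synonym procedure = "bool list \<Rightarrow> action"

definition step_prob :: "procedure \<Rightarrow> (nat \<Rightarrow> real) \<Rightarrow> bool list \<Rightarrow> bool \<Rightarrow> real" where
  "step_prob \<sigma> p h b =
     (case \<sigma> h of
        Flip i \<Rightarrow> (if b then p i else 1 - p i)
      | Aux q \<Rightarrow> (if b then q else 1 - q)
      | Stop U \<Rightarrow> 0)"

definition reach_prob :: "procedure \<Rightarrow> (nat \<Rightarrow> real) \<Rightarrow> bool list \<Rightarrow> real" where
  "reach_prob \<sigma> p h = (\<Prod>j<length h. step_prob \<sigma> p (take j h) (h ! j))"

definition is_stop :: "action \<Rightarrow> bool" where
  "is_stop a \<longleftrightarrow> (\<exists>U. a = Stop U)"

definition wf_procedure :: "nat \<Rightarrow> procedure \<Rightarrow> bool" where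
  "wf_procedure n \<sigma> \<longleftrightarrow>
     (\<forall>h i. \<sigma> h = Flip i \<longrightarrow> i < n) \<and>
     (\<forall>h q. \<sigma> h = Aux q \<longrightarrow> 0 \<le> q \<and> q \<le> 1)"

end

(*
  One round of the sampler flips all n coins and lets X be the set of heads. If |X| <> k the
  round fails. Otherwise it picks b uniformly from {0..n-1}. If b is in X, it outputs X with
  probability 1/k; if not, it flips coin b and on heads outputs X - {a} + {b}, where a is drawn
  from X with probability proportional to 1 - p a (by rejection sampling). Rounds are repeated
  until one succeeds.

  Let w X be the probability that the heads set is X and s X = sum over a in X of (1 - p a);
  since the p i add up to k, also s X = sum over b outside X of p b. Up to the factor 1/n, a
  round with heads set X of size k succeeds with weight 1 + s X, and outputs a set containing i
  with weight [i in X] * s X + p i. The exchange identity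
    w X * (1 - p a) * p b = w (X - {a} + {b}) * (1 - p b) * p a
  pairs the swaps a -> b with the swaps b -> a and yields
    sum_X w X * s X * [i in X] = p i * sum_X w X * s X,
  so a round outputs a set containing i with probability p i * D, where
  D = sum_X w X * (1 + s X) / n is its success probability. Some k-set containing every coin with
  p i = 1 and no coin with p i = 0 has w X > 0, so D > 0: the rounds terminate almost surely,
  and conditioning on success gives P[i in U] = p i.

  Procedures are modelled by their trees of coin outcomes and output probabilities are sums of
  path weights. Sequential composition and repetition until success have exact output
  distributions; for repetition, summability comes from the fact that a prefix-free set of
  histories has total weight at most 1.
*)
theory Submission
  imports Defs
begin

lemma has_sum_change_set_neutral:
  fixes f :: "'a \<Rightarrow> 'b::{comm_monoid_add, topological_space}"
  assumes "(f has_sum s) A" "\<And>x. x \<in> A - B \<Longrightarrow> f x = 0" "\<And>x. x \<in> B - A \<Longrightarrow> f x = 0"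
  shows "(f has_sum s) B"
  using assms has_sum_cong_neutral[of B A f f s] by auto

lemma sum_of_bool_mult:
  fixes f :: "'a \<Rightarrow> 'b::semiring_1"
  assumes "finite A" "X \<subseteq> A"
  shows "(\<Sum>a\<in>A. of_bool (a \<in> X) * f a) = (\<Sum>a\<in>X. f a)"
proof -
  have "(\<Sum>a\<in>A. of_bool (a \<in> X) * f a) = (\<Sum>a\<in>A \<inter> X. f a)"
    using assms(1) by (simp add: sum.inter_restrict)
  then show ?thesis
    using assms(2) by (simp add: Int_absorb1)
qed

lemma sum_of_bool_eq_mult:
  fixes f :: "'a \<Rightarrow> 'b::semiring_1"
  assumes "finite A"
  shows "(\<Sum>x\<in>A. of_bool (x = a) * f x) = of_bool (a \<in> A) * f a"
proof -
  have "(\<Sum>x\<in>A. of_bool (x = a) * f x) = (\<Sum>x\<in>A. if x = a then f a else 0)"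
    by (intro sum.cong) auto
  then show ?thesis
    using assms by simp
qed

section \<open>Samplers\<close>

(* Samplers generalise procedure to outputs of any type, so that they can be composed;
   to_action converts back. *)
datatype 'a act = Flip_coin nat | Flip_aux real | is_return: Return (returned: 'a)

type_synonym 'a sampler = "bool list \<Rightarrow> 'a act"

definition act_prob :: "'a act \<Rightarrow> (nat \<Rightarrow> real) \<Rightarrow> bool \<Rightarrow> real" where
  "act_prob a p b = (case a of
      Flip_coin i \<Rightarrow> (if b then p i else 1 - p i)
    | Flip_aux q \<Rightarrow> (if b then q else 1 - q)
    | Return _ \<Rightarrow> 0)"

definition path_weight :: "'a sampler \<Rightarrow> (nat \<Rightarrow> real) \<Rightarrow> bool list \<Rightarrow> real" where
  "path_weight P p h = (\<Prod>j<length h. act_prob (P (take j h)) p (h ! j))"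

definition nonneg_steps :: "'a sampler \<Rightarrow> (nat \<Rightarrow> real) \<Rightarrow> bool" where
  "nonneg_steps P p \<longleftrightarrow> (\<forall>h b. 0 \<le> act_prob (P h) p b)"

definition first_return :: "'a sampler \<Rightarrow> bool list \<Rightarrow> bool" where
  "first_return P h \<longleftrightarrow> is_return (P h) \<and> (\<forall>j<length h. \<not> is_return (P (take j h)))"

lemma act_prob_Return [simp]: "act_prob (Return x) p b = 0"
  by (simp add: act_prob_def)

lemma act_prob_map_act [simp]: "act_prob (map_act f a) p b = act_prob a p b"
  by (cases a) (simp_all add: act_prob_def)

lemma Return_eq_map_act_iff [simp]: "Return y = map_act f a \<longleftrightarrow> (\<exists>x. a = Return x \<and> y = f x)"
  by (cases a) auto

lemma act_prob_True_add_False_le_1: "act_prob a p True + act_prob a p False \<le> 1"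
  by (cases a) (simp_all add: act_prob_def)

lemma act_prob_Flip_coin_nonneg: "0 \<le> p i \<Longrightarrow> p i \<le> 1 \<Longrightarrow> 0 \<le> act_prob (Flip_coin i) p b"
  by (simp add: act_prob_def)

lemma act_prob_Flip_aux_nonneg: "0 \<le> q \<Longrightarrow> q \<le> 1 \<Longrightarrow> 0 \<le> act_prob (Flip_aux q) p b"
  by (simp add: act_prob_def)

lemma path_weight_Nil [simp]: "path_weight P p [] = 1"
  by (simp add: path_weight_def)

lemma path_weight_snoc: "path_weight P p (h @ [b]) = path_weight P p h * act_prob (P h) p b"
proof -
  have "(\<Prod>j<length h. act_prob (P (take j (h @ [b]))) p ((h @ [b]) ! j)) = path_weight P p h"
    unfolding path_weight_def by (intro prod.cong) (auto simp: nth_append)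
  then show ?thesis
    by (simp add: path_weight_def prod.lessThan_Suc)
qed

lemma path_weight_append:
  "path_weight P p (h1 @ h2) = path_weight P p h1 * path_weight (\<lambda>h. P (h1 @ h)) p h2"
  by (induction h2 rule: rev_induct) (simp_all flip: append_assoc add: path_weight_snoc)

lemma path_weight_Cons:
  "path_weight P p (b # h) = act_prob (P []) p b * path_weight (\<lambda>t. P (b # t)) p h"
  using path_weight_append[of P p "[b]" h] by (simp add: path_weight_def)

lemma path_weight_eq_0_if_returned:
  assumes "j < length h" "is_return (P (take j h))"
  shows "path_weight P p h = 0"
  unfolding path_weight_def using assms by (intro prod_zero) (auto simp: act_prob_def act.case_eq_if)

lemma path_weight_nonneg: "nonneg_steps P p \<Longrightarrow> 0 \<le> path_weight P p h"
  unfolding path_weight_def nonneg_steps_def by (intro prod_nonneg) auto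

lemma first_return_unique:
  assumes "first_return P h1" "first_return P h1'" "h1 @ h2 = h1' @ h2'"
  shows "h1 = h1'"
proof -
  have False if "first_return P (g @ us)" "first_return P g" "us \<noteq> []" for g us
    using that by (auto simp: first_return_def dest!: spec[of _ "length g"])
  then show ?thesis
    using assms by (auto simp: append_eq_append_conv2)
qed

lemma first_return_split:
  assumes "\<exists>j\<le>length h. is_return (P (take j h))"
  defines "j \<equiv> LEAST j. is_return (P (take j h))"
  shows "first_return P (take j h)" "j \<le> length h"
proof -
  obtain j0 where j0: "j0 \<le> length h" "is_return (P (take j0 h))"
    using assms(1) by blast
  have "is_return (P (take j h))" "j \<le> j0"
    unfolding j_def using j0(2) by (auto intro: LeastI Least_le)
  moreover have "\<not> is_return (P (take i h))" if "i < j" for i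
    using that unfolding j_def by (rule not_less_Least)
  ultimately show "first_return P (take j h)" "j \<le> length h"
    using j0(1) by (auto simp: first_return_def min_def)
qed

(* Until P has returned, bind_sampler P Q performs the actions of P; map_act undefined only
   changes the type of the (absent) return value. *)
definition bind_sampler :: "'a sampler \<Rightarrow> ('a \<Rightarrow> 'b sampler) \<Rightarrow> 'b sampler" where
  "bind_sampler P Q h = (if \<exists>j\<le>length h. is_return (P (take j h))
     then (let j = LEAST j. is_return (P (take j h)) in Q (returned (P (take j h))) (drop j h))
     else map_act undefined (P h))"

lemma bind_sampler_first_return:
  assumes "first_return P h1" "P h1 = Return x"
  shows "bind_sampler P Q (h1 @ h2) = Q x h2"
proof -
  have "(LEAST j. is_return (P (take j (h1 @ h2)))) = length h1"
    using assms(1) by (intro Least_equality) (auto simp: first_return_def intro: leI)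
  moreover have "is_return (P (take (length h1) (h1 @ h2)))"
    using assms(2) by simp
  ultimately show ?thesis
    using assms(2) unfolding bind_sampler_def by (metis append_eq_conv_conj act.sel le_add1 length_append)
qed

lemma bind_sampler_cases:
  obtains (running) "\<forall>j<length h. \<not> is_return (P (take j h))"
      "\<not> is_return (bind_sampler P Q h)" "bind_sampler P Q h = map_act undefined (P h)"
    | (returned) h1 h2 x where "h = h1 @ h2" "first_return P h1" "P h1 = Return x"
      "bind_sampler P Q h = Q x h2"
proof (cases "\<exists>j\<le>length h. is_return (P (take j h))")
  case True
  define j where "j = (LEAST j. is_return (P (take j h)))"
  have "first_return P (take j h)"
    using first_return_split[OF True] by (simp add: j_def)
  moreover obtain x where "P (take j h) = Return x"
    using calculation by (auto simp: first_return_def is_return_def)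
  ultimately show thesis
    using returned[of "take j h" "drop j h"] bind_sampler_first_return by (metis append_take_drop_id)
next
  case False
  then show thesis
    by (intro running) (auto simp: bind_sampler_def dest: spec[of _ "length h"])
qed

lemma bind_sampler_Nil:
  "\<not> is_return (P []) \<Longrightarrow> bind_sampler P Q [] = map_act undefined (P [])"
  by (simp add: bind_sampler_def)

lemma path_weight_bind_running:
  assumes "\<forall>j<length h. \<not> is_return (P (take j h))"
  shows "path_weight (bind_sampler P Q) p h = path_weight P p h"
  unfolding path_weight_def
proof (intro prod.cong refl)
  fix j assume "j \<in> {..<length h}"
  then have "\<forall>i\<le>j. \<not> is_return (P (take i (take j h)))"
    using assms by (auto simp: min_def)
  then have "bind_sampler P Q (take j h) = map_act undefined (P (take j h))"
    by (auto simp: bind_sampler_def min_def)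
  then show "act_prob (bind_sampler P Q (take j h)) p (h ! j) = act_prob (P (take j h)) p (h ! j)"
    by simp
qed

lemma path_weight_bind:
  assumes "first_return P h1" "P h1 = Return x"
  shows "path_weight (bind_sampler P Q) p (h1 @ h2) = path_weight P p h1 * path_weight (Q x) p h2"
proof -
  have "path_weight (bind_sampler P Q) p h1 = path_weight P p h1"
    using assms(1) by (intro path_weight_bind_running) (simp add: first_return_def)
  moreover have "(\<lambda>h. bind_sampler P Q (h1 @ h)) = Q x"
    using bind_sampler_first_return[OF assms] by auto
  ultimately show ?thesis
    by (simp add: path_weight_append)
qed

lemma nonneg_steps_bind:
  assumes "nonneg_steps P p" "\<And>x. nonneg_steps (Q x) p"
  shows "nonneg_steps (bind_sampler P Q) p"
  unfolding nonneg_steps_def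
proof (intro allI)
  fix h b
  show "0 \<le> act_prob (bind_sampler P Q h) p b"
    by (cases rule: bind_sampler_cases[where P=P and Q=Q and h=h]) (use assms in \<open>auto simp: nonneg_steps_def\<close>)
qed

definition return_sampler :: "'a \<Rightarrow> 'a sampler" where
  "return_sampler x = (\<lambda>h. Return x)"

definition coin_sampler :: "bool act \<Rightarrow> bool sampler" where
  "coin_sampler a = (\<lambda>h. if h = [] then a else Return (hd h))"

abbreviation flip_coin :: "nat \<Rightarrow> bool sampler" where
  "flip_coin i \<equiv> coin_sampler (Flip_coin i)"

abbreviation flip_aux :: "real \<Rightarrow> bool sampler" where
  "flip_aux q \<equiv> coin_sampler (Flip_aux q)"

lemma return_sampler_apply: "return_sampler x h = Return x"
  by (simp add: return_sampler_def)

lemma path_weight_return_sampler: "path_weight (return_sampler x) p h = (if h = [] then 1 else 0)"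
  by (cases h) (simp_all add: path_weight_Cons return_sampler_def)

lemma nonneg_steps_return_sampler: "nonneg_steps (return_sampler x) p"
  by (simp add: nonneg_steps_def return_sampler_def)

lemma path_weight_coin_sampler:
  "path_weight (coin_sampler a) p h = (if h = [] then 1 else if tl h = [] then act_prob a p (hd h) else 0)"
proof (cases h)
  case (Cons b t)
  have "(\<lambda>h. coin_sampler a (b # h)) = return_sampler b"
    by (auto simp: coin_sampler_def return_sampler_def)
  then show ?thesis
    using Cons by (simp add: path_weight_Cons path_weight_return_sampler coin_sampler_def)
qed simp

definition wf_act :: "nat \<Rightarrow> 'a act \<Rightarrow> bool" where
  "wf_act n a \<longleftrightarrow>
     (case a of Flip_coin i \<Rightarrow> i < n | Flip_aux q \<Rightarrow> 0 \<le> q \<and> q \<le> 1 | Return _ \<Rightarrow> True)"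

definition wf_sampler :: "nat \<Rightarrow> 'a sampler \<Rightarrow> bool" where
  "wf_sampler n P \<longleftrightarrow> (\<forall>h. wf_act n (P h))"

definition returns_in :: "'a sampler \<Rightarrow> 'a set \<Rightarrow> bool" where
  "returns_in P A \<longleftrightarrow> (\<forall>h x. P h = Return x \<longrightarrow> x \<in> A)"

lemma wf_act_map_act [simp]: "wf_act n (map_act f a) = wf_act n a"
  by (cases a) (simp_all add: wf_act_def)

lemma wf_act_Return [simp]: "wf_act n (Return x)"
  by (simp add: wf_act_def)

lemma act_prob_nonneg:
  assumes "wf_act n a" "\<forall>i<n. 0 \<le> p i \<and> p i \<le> 1"
  shows "0 \<le> act_prob a p b"
  using assms by (cases a) (auto simp: wf_act_def act_prob_def)

lemma nonneg_steps_if_wf: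
  "wf_sampler n P \<Longrightarrow> \<forall>i<n. 0 \<le> p i \<and> p i \<le> 1 \<Longrightarrow> nonneg_steps P p"
  by (auto simp: nonneg_steps_def wf_sampler_def intro: act_prob_nonneg)

lemma wf_sampler_return_sampler: "wf_sampler n (return_sampler x)"
  by (simp add: wf_sampler_def wf_act_def return_sampler_def)

lemma wf_sampler_coin_sampler: "wf_act n a \<Longrightarrow> wf_sampler n (coin_sampler a)"
  by (simp add: wf_sampler_def wf_act_def coin_sampler_def)

lemma wf_sampler_bind:
  assumes "wf_sampler n P" "\<And>x. wf_sampler n (Q x)"
  shows "wf_sampler n (bind_sampler P Q)"
  unfolding wf_sampler_def
proof
  fix h
  show "wf_act n (bind_sampler P Q h)"
    by (cases rule: bind_sampler_cases[where P=P and Q=Q and h=h])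
      (use assms in \<open>simp_all add: wf_sampler_def\<close>)
qed

lemma returns_in_UNIV [simp]: "returns_in P UNIV"
  by (simp add: returns_in_def)

lemma returns_in_return_sampler: "x \<in> A \<Longrightarrow> returns_in (return_sampler x) A"
  by (simp add: returns_in_def return_sampler_def)

lemma returns_in_bind:
  assumes "returns_in P A" "\<And>x. x \<in> A \<Longrightarrow> returns_in (Q x) B"
  shows "returns_in (bind_sampler P Q) B"
  unfolding returns_in_def
proof (intro allI impI)
  fix h y
  assume ret: "bind_sampler P Q h = Return y"
  then show "y \<in> B"
  proof (cases rule: bind_sampler_cases[where P=P and Q=Q and h=h])
    case running
    with ret show ?thesis
      by simp
  qed (use assms ret in \<open>fastforce simp: returns_in_def\<close>)
qed

section \<open>Output distributions\<close>

definition has_output_dist :: "'a sampler \<Rightarrow> (nat \<Rightarrow> real) \<Rightarrow> 'a set \<Rightarrow> ('a \<Rightarrow> real) \<Rightarrow> bool" where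
  "has_output_dist P p S f \<longleftrightarrow> finite S \<and>
     (\<forall>x\<in>S. (path_weight P p has_sum f x) {h. P h = Return x}) \<and>
     (\<forall>h x. P h = Return x \<longrightarrow> x \<notin> S \<longrightarrow> path_weight P p h = 0)"

lemma has_output_dist_cong:
  "has_output_dist P p S f \<Longrightarrow> (\<And>x. x \<in> S \<Longrightarrow> f x = f' x) \<Longrightarrow> has_output_dist P p S f'"
  by (auto simp: has_output_dist_def)

lemma has_output_dist_extend:
  assumes "has_output_dist P p S f" "S \<subseteq> S'" "finite S'"
  shows "has_output_dist P p S' (\<lambda>x. if x \<in> S then f x else 0)"
  using assms by (auto simp: has_output_dist_def intro: has_sum_0)

lemma has_output_dist_has_sum:
  assumes "has_output_dist P p S f"
  shows "(path_weight P p has_sum (\<Sum>x\<in>S \<inter> A. f x)) {h. \<exists>x\<in>A. P h = Return x}"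
proof -
  have "(path_weight P p has_sum (\<Sum>x\<in>S \<inter> A. f x)) (\<Union>x\<in>S \<inter> A. {h. P h = Return x})"
    using assms by (intro sum_has_sum) (auto simp: has_output_dist_def)
  then show ?thesis
    by (rule has_sum_change_set_neutral) (use assms in \<open>auto simp: has_output_dist_def\<close>)
qed

lemma has_output_dist_first_return:
  assumes "has_output_dist P p S f" "x \<in> S"
  shows "(path_weight P p has_sum f x) {h. first_return P h \<and> P h = Return x}"
proof -
  have "(path_weight P p has_sum f x) {h. P h = Return x}"
    using assms by (auto simp: has_output_dist_def)
  moreover have "path_weight P p h = 0" if ret: "P h = Return x" "\<not> first_return P h" for h
  proof -
    obtain j where "j < length h" "is_return (P (take j h))"
      using ret by (auto simp: first_return_def)
    then show ?thesis
      by (rule path_weight_eq_0_if_returned)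
  qed
  ultimately show ?thesis
    by (rule has_sum_change_set_neutral) auto
qed

lemma has_output_dist_eq_0:
  assumes "has_output_dist P p S f" "nonneg_steps P p" "P h = Return x" "x \<notin> S \<or> f x = 0"
  shows "path_weight P p h = 0"
proof (cases "x \<in> S")
  case True
  then have "(path_weight P p has_sum 0) {h. P h = Return x}"
    using assms(1,4) by (auto simp: has_output_dist_def)
  then show ?thesis
    using assms(2,3) by (auto intro: nonneg_has_sum_le_0D path_weight_nonneg)
qed (use assms in \<open>auto simp: has_output_dist_def\<close>)

lemma has_output_dist_return_sampler:
  assumes "finite S" "x \<in> S"
  shows "has_output_dist (return_sampler x) p S (\<lambda>y. of_bool (y = x))"
proof -
  have "(path_weight (return_sampler x) p has_sum 1) UNIV"
    by (rule has_sum_finite_neutralI[where B="{[]}"]) (simp_all add: path_weight_return_sampler)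
  then show ?thesis
    using assms by (auto simp: has_output_dist_def return_sampler_def)
qed

lemma has_output_dist_coin_sampler:
  assumes "\<not> is_return a"
  shows "has_output_dist (coin_sampler a) p UNIV (act_prob a p)"
  unfolding has_output_dist_def
proof (intro conjI ballI allI impI)
  fix b
  have "{h. coin_sampler a h = Return b} = {h. h \<noteq> [] \<and> hd h = b}"
    using assms by (auto simp: coin_sampler_def)
  then show "(path_weight (coin_sampler a) p has_sum act_prob a p b) {h. coin_sampler a h = Return b}"
    by (intro has_sum_finite_neutralI[where B="{[b]}"])
      (auto simp: path_weight_coin_sampler neq_Nil_conv)
qed simp_all

lemma has_sum_bind_sampler_branch:
  assumes NP: "nonneg_steps P p" and NQ: "nonneg_steps (Q x) p"
    and hp: "(path_weight P p has_sum a) {h. first_return P h \<and> P h = Return x}"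
    and hq: "(path_weight (Q x) p has_sum c) B"
  shows "(path_weight (bind_sampler P Q) p has_sum a * c)
           ((\<lambda>(h1, h2). h1 @ h2) ` ({h. first_return P h \<and> P h = Return x} \<times> B))"
proof -
  define A where "A = {h. first_return P h \<and> P h = Return x}"
  define F where "F = (\<lambda>(h1, h2). path_weight P p h1 * path_weight (Q x) p h2)"
  have F1: "((\<lambda>h2. F (h1, h2)) has_sum path_weight P p h1 * c) B" for h1
    unfolding F_def using has_sum_cmult_right[OF hq] by simp
  have F2: "((\<lambda>h1. path_weight P p h1 * c) has_sum a * c) A"
    unfolding A_def using has_sum_cmult_left[OF hp] .
  have "F summable_on A \<times> B"
    using F1 has_sum_imp_summable[OF F2] by (intro summable_on_SigmaI[where f=F])
      (auto simp: F_def intro!: mult_nonneg_nonneg path_weight_nonneg NP NQ)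
  then have "(F has_sum a * c) (A \<times> B)"
    using F1 F2 by (intro has_sum_SigmaI[where f=F]) auto
  moreover have "inj_on (\<lambda>(h1, h2). h1 @ h2) (A \<times> B)"
    by (intro inj_onI) (auto simp: A_def dest: first_return_unique)
  moreover have "path_weight (bind_sampler P Q) p (h1 @ h2) = F (h1, h2)" if "h1 \<in> A" for h1 h2
    using that by (simp add: A_def F_def path_weight_bind)
  ultimately show ?thesis
    unfolding A_def[symmetric] by (subst has_sum_reindex) (auto simp: comp_def intro: has_sum_cong[THEN iffD1, rotated])
qed

lemma bind_sampler_Return_cases:
  assumes "nonneg_steps P p" "has_output_dist P p S f" "bind_sampler P Q h = Return y"
  obtains (null) "path_weight (bind_sampler P Q) p h = 0"
    | (branch) x h1 h2 where "x \<in> S" "f x \<noteq> 0" "h = h1 @ h2" "first_return P h1" "P h1 = Return x"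
      "Q x h2 = Return y"
proof (cases rule: bind_sampler_cases[where P=P and Q=Q and h=h])
  case running
  with assms(3) show thesis
    by simp
next
  case (returned h1 h2 x)
  show thesis
  proof (cases "x \<in> S \<and> f x \<noteq> 0")
    case False
    then have "path_weight P p h1 = 0"
      using has_output_dist_eq_0[OF assms(2,1) returned(3)] by auto
    with returned show thesis
      by (intro null) (simp add: path_weight_bind)
  qed (use returned assms(3) branch in auto)
qed

theorem has_output_dist_bind:
  assumes NP: "nonneg_steps P p" and NQ: "\<And>x. nonneg_steps (Q x) p"
    and HP: "has_output_dist P p S f"
    and HQ: "\<And>x. x \<in> S \<Longrightarrow> f x \<noteq> 0 \<Longrightarrow> has_output_dist (Q x) p T (g x)"
    and T: "finite T"
  shows "has_output_dist (bind_sampler P Q) p T (\<lambda>y. \<Sum>x\<in>S. f x * g x y)"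
proof -
  define S' where "S' = {x\<in>S. f x \<noteq> 0}"
  define C where "C y x = (\<lambda>(h1, h2). h1 @ h2) `
    ({h. first_return P h \<and> P h = Return x} \<times> {h. Q x h = Return y})" for y x
  have C_iff: "h \<in> C y x \<longleftrightarrow>
      (\<exists>h1 h2. h = h1 @ h2 \<and> first_return P h1 \<and> P h1 = Return x \<and> Q x h2 = Return y)" for h x y
    by (auto simp: C_def)
  have "(path_weight (bind_sampler P Q) p has_sum (\<Sum>x\<in>S. f x * g x y)) {h. bind_sampler P Q h = Return y}"
    if "y \<in> T" for y
  proof -
    have "(path_weight (bind_sampler P Q) p has_sum f x * g x y) (C y x)" if "x \<in> S'" for x
      unfolding C_def using that \<open>y \<in> T\<close> HQ HP
      by (intro has_sum_bind_sampler_branch NP NQ has_output_dist_first_return)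
        (auto simp: S'_def has_output_dist_def)
    then have "(path_weight (bind_sampler P Q) p has_sum (\<Sum>x\<in>S'. f x * g x y)) (\<Union>x\<in>S'. C y x)"
      using HP by (intro sum_has_sum) (auto simp: S'_def C_def has_output_dist_def dest: first_return_unique)
    also have "(\<Sum>x\<in>S'. f x * g x y) = (\<Sum>x\<in>S. f x * g x y)"
      using HP by (intro sum.mono_neutral_left) (auto simp: S'_def has_output_dist_def)
    finally show ?thesis
    proof (rule has_sum_change_set_neutral)
      show "path_weight (bind_sampler P Q) p h = 0"
        if "h \<in> {h. bind_sampler P Q h = Return y} - (\<Union>x\<in>S'. C y x)" for h
        using that by (cases rule: bind_sampler_Return_cases[OF NP HP, of Q h y]) (auto simp: C_iff S'_def)
      show "path_weight (bind_sampler P Q) p h = 0"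
        if h: "h \<in> (\<Union>x\<in>S'. C y x) - {h. bind_sampler P Q h = Return y}" for h
      proof -
        obtain x h1 h2 where "h = h1 @ h2" "first_return P h1" "P h1 = Return x" "Q x h2 = Return y"
          using h by (auto simp: C_iff)
        with h show ?thesis
          by (simp add: bind_sampler_first_return)
      qed
    qed
  qed
  moreover have "path_weight (bind_sampler P Q) p h = 0"
    if "bind_sampler P Q h = Return y" "y \<notin> T" for h y
    by (cases rule: bind_sampler_Return_cases[OF NP HP that(1)])
      (use HQ that(2) in \<open>auto simp: has_output_dist_def path_weight_bind\<close>)
  ultimately show ?thesis
    using T by (simp add: has_output_dist_def)
qed

lemma has_output_dist_bind_coin:
  assumes "\<not> is_return a" "\<And>b. 0 \<le> act_prob a p b" "\<And>b. nonneg_steps (Q b) p"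
    and "\<And>b. act_prob a p b \<noteq> 0 \<Longrightarrow> has_output_dist (Q b) p T (g b)" "finite T"
  shows "has_output_dist (bind_sampler (coin_sampler a) Q) p T
           (\<lambda>y. act_prob a p True * g True y + act_prob a p False * g False y)"
proof -
  have "nonneg_steps (coin_sampler a) p"
    using assms(2) by (simp add: nonneg_steps_def coin_sampler_def)
  then have "has_output_dist (bind_sampler (coin_sampler a) Q) p T (\<lambda>y. \<Sum>b\<in>UNIV. act_prob a p b * g b y)"
    using assms by (intro has_output_dist_bind has_output_dist_coin_sampler) auto
  then show ?thesis
    by (simp add: UNIV_bool add.commute)
qed

lemma has_output_dist_coin_return:
  assumes "\<not> is_return a" "\<And>b. 0 \<le> act_prob a p b" "finite T" "x \<in> T" "y \<in> T"
  shows "has_output_dist (bind_sampler (coin_sampler a) (\<lambda>c. return_sampler (if c then x else y))) p T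
           (\<lambda>r. act_prob a p True * of_bool (r = x) + act_prob a p False * of_bool (r = y))"
  using has_output_dist_bind_coin[where g="\<lambda>c r. of_bool (r = (if c then x else y))"] assms
  by (simp add: has_output_dist_return_sampler nonneg_steps_return_sampler)

section \<open>Repetition until success\<close>

lemma sum_path_weight_Cons_split:
  assumes "finite F" "[] \<notin> F"
  shows "(\<Sum>h\<in>F. path_weight P p h)
           = (\<Sum>b\<in>UNIV. act_prob (P []) p b * (\<Sum>t\<in>Cons b -` F. path_weight (\<lambda>h. P (b # h)) p t))"
proof -
  have fin: "finite (Cons b -` F)" for b
    using assms(1) by (rule finite_vimageI) simp
  define Sig where "Sig = (SIGMA b:UNIV. Cons b -` F)"
  have "F = (\<lambda>(b, t). b # t) ` Sig"
    using assms(2) by (auto simp: image_iff Sig_def) (metis list.exhaust vimageI2)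
  then have "(\<Sum>h\<in>F. path_weight P p h) = (\<Sum>(b, t)\<in>Sig. path_weight P p (b # t))"
    by (simp, subst sum.reindex) (auto simp: inj_on_def case_prod_unfold)
  also have "\<dots> = (\<Sum>b\<in>UNIV. \<Sum>t\<in>Cons b -` F. path_weight P p (b # t))"
    using fin by (simp add: sum.Sigma Sig_def)
  finally show ?thesis
    by (simp add: path_weight_Cons sum_distrib_left)
qed

lemma sum_path_weight_prefix_free_le_1:
  assumes "nonneg_steps P p" "finite F" "\<And>h t. h \<in> F \<Longrightarrow> h @ t \<in> F \<Longrightarrow> t = []"
  shows "(\<Sum>h\<in>F. path_weight P p h) \<le> 1"
proof -
  have "(\<Sum>h\<in>F. path_weight P p h) \<le> 1" if "\<forall>h\<in>F. length h \<le> N" for N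
    using assms that
  proof (induction N arbitrary: P F)
    case 0
    then have "F \<subseteq> {[]}"
      by auto
    then show ?case
      by (auto dest!: subset_singletonD)
  next
    case (Suc N)
    show ?case
    proof (cases "[] \<in> F")
      case True
      then have "F = {[]}"
        using Suc.prems(3)[of "[]"] by auto
      then show ?thesis
        by simp
    next
      case False
      have "(\<Sum>t\<in>Cons b -` F. path_weight (\<lambda>h. P (b # h)) p t) \<le> 1" for b
        using Suc.prems by (intro Suc.IH) (auto simp: nonneg_steps_def intro: finite_vimageI)
      then have "(\<Sum>h\<in>F. path_weight P p h) \<le> (\<Sum>b\<in>UNIV. act_prob (P []) p b)"
        using Suc.prems(1) False
        by (auto simp: sum_path_weight_Cons_split[OF Suc.prems(2)] nonneg_steps_def
            intro!: sum_mono mult_left_le)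
      also have "\<dots> \<le> 1"
        using act_prob_True_add_False_le_1 by (simp add: UNIV_bool add.commute)
      finally show ?thesis .
    qed
  qed
  then show ?thesis
    using assms(2) by (metis Max_ge finite_imageI image_eqI)
qed

lemma sum_path_weight_returning_le_1:
  assumes "nonneg_steps P p" "finite G" "\<And>h. h \<in> G \<Longrightarrow> is_return (P h)"
  shows "(\<Sum>h\<in>G. path_weight P p h) \<le> 1"
proof -
  have "(\<Sum>h\<in>G. path_weight P p h) = (\<Sum>h\<in>{h\<in>G. first_return P h}. path_weight P p h)"
    using assms(2,3)
    by (intro sum.mono_neutral_right) (auto simp: first_return_def intro: path_weight_eq_0_if_returned)
  also have "\<dots> \<le> 1"
  proof (rule sum_path_weight_prefix_free_le_1)
    show "t = []" if "h \<in> {h\<in>G. first_return P h}" "h @ t \<in> {h\<in>G. first_return P h}" for h t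
      using that by (auto simp: first_return_def dest!: spec[of _ "length h"])
  qed (use assms in auto)
  finally show ?thesis .
qed

(* The junk value Return undefined, for P [] = Return None, is never reached: all lemmas about
   retry assume that P [] is not a return. *)
function retry :: "'a option sampler \<Rightarrow> 'a sampler" where
  "retry P h = (if \<exists>j\<le>length h. is_return (P (take j h))
     then (let j = LEAST j. is_return (P (take j h)) in
       case returned (P (take j h)) of
         Some x \<Rightarrow> Return x
       | None \<Rightarrow> if j = 0 then Return undefined else retry P (drop j h))
     else map_act undefined (P h))"
  by pat_completeness auto
termination
proof (relation "Wellfounded.measure (\<lambda>(P, h). length h)")
  fix P :: "'a option sampler" and h j
  assume "\<exists>j\<le>length h. is_return (P (take j h))" "j = (LEAST j. is_return (P (take j h)))" "j \<noteq> 0"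
  then show "((P, drop j h), P, h) \<in> Wellfounded.measure (\<lambda>(P, h). length h)"
    using first_return_split(2) by fastforce
qed simp

declare retry.simps [simp del]

lemma retry_unfold:
  assumes "\<not> is_return (P [])"
  shows "retry P = bind_sampler P (case_option (retry P) return_sampler)"
proof
  fix h
  show "retry P h = bind_sampler P (case_option (retry P) return_sampler) h"
  proof (cases "\<exists>j\<le>length h. is_return (P (take j h))")
    case True
    moreover have "(LEAST j. is_return (P (take j h))) \<noteq> 0"
      using first_return_split(1)[OF True] assms by (auto simp: first_return_def)
    ultimately show ?thesis
      unfolding retry.simps[of P h] by (auto simp: bind_sampler_def return_sampler_def Let_def split: option.split)
  next
    case False
    then show ?thesis
      unfolding retry.simps[of P h] by (simp only: bind_sampler_def if_False)
  qed
qed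

lemma retry_cases:
  assumes "\<not> is_return (P [])"
  obtains (running) "\<not> is_return (retry P h)" "retry P h = map_act undefined (P h)"
    | (success) h1 h2 x where "h = h1 @ h2" "first_return P h1" "P h1 = Return (Some x)"
      "retry P h = Return x" "path_weight (retry P) p h = path_weight P p h1 * of_bool (h2 = [])"
    | (failure) h1 h2 where "h = h1 @ h2" "first_return P h1" "P h1 = Return None"
      "retry P h = retry P h2" "length h2 < length h"
      "path_weight (retry P) p h = path_weight P p h1 * path_weight (retry P) p h2"
proof -
  have unfold: "retry P = bind_sampler P (case_option (retry P) return_sampler)"
    using assms by (rule retry_unfold)
  show thesis
  proof (cases rule: bind_sampler_cases[where P=P and Q="case_option (retry P) return_sampler" and h=h])
    case running
    then show thesis
      by (intro that(1)) (subst unfold, simp)+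
  next
    case (returned h1 h2 r)
    have "h1 \<noteq> []"
      using returned(2) assms by (auto simp: first_return_def)
    moreover have "path_weight (retry P) p h
        = path_weight P p h1 * path_weight (case_option (retry P) return_sampler r) p h2"
      unfolding returned(1) by (subst unfold) (rule path_weight_bind[OF returned(2,3)])
    moreover have "retry P h = case_option (retry P) return_sampler r h2"
      by (subst unfold) (rule returned(4))
    ultimately show thesis
      using returned(1-3) that(2,3)
      by (cases r) (auto simp: path_weight_return_sampler return_sampler_apply)
  qed
qed

lemma wf_sampler_retry:
  assumes "wf_sampler n P" "\<not> is_return (P [])"
  shows "wf_sampler n (retry P)"
  unfolding wf_sampler_def
proof
  fix h
  show "wf_act n (retry P h)"
  proof (induction h rule: length_induct)
    case (1 h)
    show ?case
      by (cases rule: retry_cases[where P=P and h=h, OF assms(2)])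
        (use assms(1) 1 in \<open>auto simp: wf_sampler_def\<close>)
  qed
qed

lemma nonneg_steps_retry:
  assumes "nonneg_steps P p" "\<not> is_return (P [])"
  shows "nonneg_steps (retry P) p"
  unfolding nonneg_steps_def
proof (intro allI)
  fix h b
  show "0 \<le> act_prob (retry P h) p b"
  proof (induction h rule: length_induct)
    case (1 h)
    show ?case
      by (cases rule: retry_cases[where P=P and h=h, OF assms(2)])
        (use assms(1) 1 in \<open>auto simp: nonneg_steps_def\<close>)
  qed
qed

lemma returns_in_retry:
  assumes "returns_in P (insert None (Some ` A))" "\<not> is_return (P [])"
  shows "returns_in (retry P) A"
  unfolding returns_in_def
proof (intro allI impI)
  fix h y
  show "retry P h = Return y \<Longrightarrow> y \<in> A"
  proof (induction h rule: length_induct)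
    case (1 h)
    then show ?case
      by (cases rule: retry_cases[where P=P and h=h, OF assms(2)])
        (use assms(1) in \<open>force simp: returns_in_def\<close>)+
  qed
qed

lemma path_weight_retry_eq_0:
  assumes "has_output_dist P p (insert None (Some ` S)) f" "\<not> is_return (P [])"
    and "retry P h = Return y" "y \<notin> S"
  shows "path_weight (retry P) p h = 0"
  using assms(3)
proof (induction h rule: length_induct)
  case (1 h)
  show ?case
    by (cases rule: retry_cases[where P=P and h=h and p=p, OF assms(2)])
      (use assms(1,4) 1 in \<open>force simp: has_output_dist_def image_iff\<close>)+
qed

theorem has_output_dist_retry:
  assumes NP: "nonneg_steps P p" and P0: "\<not> is_return (P [])"
    and HP: "has_output_dist P p (insert None (Some ` S)) f" and fail: "f None < 1"
  shows "has_output_dist (retry P) p S (\<lambda>x. f (Some x) / (1 - f None))"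
proof -
  have S: "finite S"
    using HP by (auto simp: has_output_dist_def dest: finite_imageD)
  have NR: "nonneg_steps (retry P) p"
    using NP P0 by (rule nonneg_steps_retry)
  \<comment> \<open>The output weights T of retry P exist by the prefix-free bound; unfolding one round then
    gives the linear equation T y = f None * T y + f (Some y).\<close>
  define T where "T y = infsum (path_weight (retry P) p) {h. retry P h = Return y}" for y
  have "path_weight (retry P) p summable_on {h. retry P h = Return y}" for y
  proof (rule nonneg_bdd_above_summable_on)
    show "bdd_above (sum (path_weight (retry P) p) ` {F. F \<subseteq> {h. retry P h = Return y} \<and> finite F})"
      by (intro bdd_aboveI[where M=1]) (auto intro!: sum_path_weight_returning_le_1[OF NR])
  qed (use NR path_weight_nonneg in blast)
  then have HR: "has_output_dist (retry P) p S T"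
    using S path_weight_retry_eq_0[OF HP P0]
    by (auto simp: has_output_dist_def T_def summable_iff_has_sum_infsum)
  define g where "g r = (case r of None \<Rightarrow> T | Some x \<Rightarrow> (\<lambda>y. of_bool (y = x)))" for r
  have "has_output_dist (bind_sampler P (case_option (retry P) return_sampler)) p S
          (\<lambda>y. \<Sum>r\<in>insert None (Some ` S). f r * g r y)"
  proof (rule has_output_dist_bind[OF NP _ HP])
    show "nonneg_steps (case_option (retry P) return_sampler r) p" for r
      using NR by (cases r) (simp_all add: nonneg_steps_return_sampler)
    show "has_output_dist (case_option (retry P) return_sampler r) p S (g r)"
      if "r \<in> insert None (Some ` S)" for r
      using that HR S by (auto simp: g_def intro: has_output_dist_return_sampler)
  qed (rule S)
  then have HR': "has_output_dist (retry P) p S (\<lambda>y. \<Sum>r\<in>insert None (Some ` S). f r * g r y)"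
    by (simp flip: retry_unfold[of P, OF P0])
  have "T y = (\<Sum>r\<in>insert None (Some ` S). f r * g r y)" if "y \<in> S" for y
  proof (rule has_sum_unique)
    show "(path_weight (retry P) p has_sum T y) {h. retry P h = Return y}"
      using HR that unfolding has_output_dist_def by blast
    show "(path_weight (retry P) p has_sum (\<Sum>r\<in>insert None (Some ` S). f r * g r y))
        {h. retry P h = Return y}"
      using HR' that unfolding has_output_dist_def by blast
  qed
  also have "(\<Sum>r\<in>insert None (Some ` S). f r * g r y) = f None * T y + f (Some y)" if "y \<in> S" for y
    using that S by (simp add: g_def sum.reindex)
  finally have "T y = f None * T y + f (Some y)" if "y \<in> S" for y
    using that by blast
  then show ?thesis
    using fail by (intro has_output_dist_cong[OF HR]) (auto simp: field_simps)
qed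

section \<open>Uniform choice, independent flips and tails-weighted choice\<close>

(* uniform 0 is a junk base case: uniform 1 reaches it only with probability 1 - 1/1 = 0. *)
primrec uniform :: "nat \<Rightarrow> nat sampler" where
  "uniform 0 = return_sampler 0"
| "uniform (Suc m) =
     bind_sampler (flip_aux (1 / real (Suc m))) (\<lambda>c. if c then return_sampler m else uniform m)"

lemma wf_sampler_uniform: "wf_sampler n (uniform m)"
  by (induction m) (auto intro!: wf_sampler_bind wf_sampler_coin_sampler wf_sampler_return_sampler
      simp: wf_act_def)

lemma nonneg_steps_uniform: "nonneg_steps (uniform m) p"
  using wf_sampler_uniform[of 0] by (rule nonneg_steps_if_wf) simp

lemma uniform_Nil: "\<not> is_return (uniform (Suc m) [])"
  by (simp add: bind_sampler_Nil coin_sampler_def)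

lemma has_output_dist_uniform:
  "0 < m \<Longrightarrow> has_output_dist (uniform m) p {..<m} (\<lambda>_. 1 / real m)"
proof (induction m)
  case (Suc m)
  define g where "g c = (if c then (\<lambda>y. of_bool (y = m)) else (\<lambda>y. of_bool (y < m) / real m))" for c
  let ?a = "Flip_aux (1 / real (Suc m)) :: bool act"
  have "has_output_dist (uniform (Suc m)) p {..<Suc m}
      (\<lambda>y. act_prob ?a p True * g True y + act_prob ?a p False * g False y)"
    unfolding uniform.simps
  proof (rule has_output_dist_bind_coin)
    show "has_output_dist (if c then return_sampler m else uniform m) p {..<Suc m} (g c)"
      if "act_prob ?a p c \<noteq> 0" for c
    proof (cases c)
      case False
      then have "0 < m"
        using that by (auto simp: act_prob_def)
      then show ?thesis
        using has_output_dist_extend[OF Suc.IH, of "{..<Suc m}"] False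
        by (auto simp: g_def intro: has_output_dist_cong)
    qed (auto simp: g_def intro: has_output_dist_return_sampler)
  qed (auto intro: act_prob_Flip_aux_nonneg nonneg_steps_uniform nonneg_steps_return_sampler)
  then show ?case
    by (rule has_output_dist_cong) (auto simp: g_def act_prob_def field_simps less_Suc_eq add_nonneg_eq_0_iff)
qed simp

definition heads_prob :: "(nat \<Rightarrow> real) \<Rightarrow> nat \<Rightarrow> nat set \<Rightarrow> real" where
  "heads_prob p m X = (\<Prod>i<m. if i \<in> X then p i else 1 - p i)"

lemma heads_prob_Suc: "heads_prob p (Suc m) X = heads_prob p m X * (if m \<in> X then p m else 1 - p m)"
  by (simp add: heads_prob_def)

lemma heads_prob_cong: "(\<And>i. i < m \<Longrightarrow> i \<in> X \<longleftrightarrow> i \<in> Y) \<Longrightarrow> heads_prob p m X = heads_prob p m Y"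
  unfolding heads_prob_def by (rule prod.cong) auto

lemma heads_prob_nonneg: "\<forall>i<m. 0 \<le> p i \<and> p i \<le> 1 \<Longrightarrow> 0 \<le> heads_prob p m X"
  unfolding heads_prob_def by (intro prod_nonneg) auto

lemma sum_heads_prob: "(\<Sum>X\<in>Pow {..<m}. heads_prob p m X) = 1"
proof -
  have "heads_prob p m X = (\<Prod>i\<in>X. p i) * (\<Prod>i\<in>{..<m} - X. 1 - p i)" if "X \<subseteq> {..<m}" for X
    using that unfolding heads_prob_def by (simp add: prod.If_cases Diff_eq Int_absorb1)
  then have "(\<Sum>X\<in>Pow {..<m}. heads_prob p m X)
      = (\<Sum>X\<in>Pow {..<m}. (\<Prod>i\<in>X. p i) * (\<Prod>i\<in>{..<m} - X. 1 - p i))"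
    by (intro sum.cong) auto
  also have "\<dots> = (\<Prod>i<m. p i + (1 - p i))"
    by (rule prod_add[symmetric]) simp
  finally show ?thesis
    by simp
qed

lemma heads_prob_swap:
  assumes "a \<in> X" "X \<subseteq> {..<n}" "b \<notin> X" "b < n"
  shows "heads_prob p n X * ((1 - p a) * p b) = heads_prob p n (insert b (X - {a})) * ((1 - p b) * p a)"
proof -
  define R where "R = {..<n} - {a, b}"
  have split: "heads_prob p n Z = (if a \<in> Z then p a else 1 - p a) * (if b \<in> Z then p b else 1 - p b)
      * (\<Prod>i\<in>R. if i \<in> Z then p i else 1 - p i)" for Z
  proof -
    have R: "{..<n} = insert a (insert b R)" "a \<noteq> b" "a \<notin> R" "b \<notin> R" "finite R"
      using assms by (auto simp: R_def)
    show ?thesis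
      unfolding heads_prob_def R(1) using R(2-) by (simp add: mult.assoc)
  qed
  have "(\<Prod>i\<in>R. if i \<in> X then p i else 1 - p i) = (\<Prod>i\<in>R. if i \<in> insert b (X - {a}) then p i else 1 - p i)"
    by (intro prod.cong) (auto simp: R_def)
  moreover have "a \<noteq> b"
    using assms by auto
  ultimately show ?thesis
    using assms by (simp add: split[of X] split[of "insert b (X - {a})"] mult_ac)
qed

primrec flip_all :: "nat \<Rightarrow> nat set sampler" where
  "flip_all 0 = return_sampler {}"
| "flip_all (Suc m) = bind_sampler (flip_all m)
     (\<lambda>X. bind_sampler (flip_coin m) (\<lambda>c. return_sampler (if c then insert m X else X)))"

lemma wf_sampler_flip_all: "m \<le> n \<Longrightarrow> wf_sampler n (flip_all m)"
  by (induction m) (auto intro!: wf_sampler_bind wf_sampler_coin_sampler wf_sampler_return_sampler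
      simp: wf_act_def)

lemma returns_in_flip_all: "returns_in (flip_all m) (Pow {..<m})"
proof (induction m)
  case (Suc m)
  show ?case
    unfolding flip_all.simps
    by (rule returns_in_bind[OF Suc])
      (auto intro!: returns_in_bind[where A=UNIV] returns_in_return_sampler split: if_splits)
qed (simp add: returns_in_return_sampler)

lemma flip_all_Nil: "\<not> is_return (flip_all (Suc m) [])"
proof (cases "is_return (flip_all m [])")
  case True
  then show ?thesis
    by (auto simp: bind_sampler_def coin_sampler_def is_return_def)
next
  case False
  then show ?thesis
    by (simp add: bind_sampler_Nil)
qed

lemma sum_heads_prob_insert:
  assumes "Y \<subseteq> {..<Suc m}"
  shows "(\<Sum>X\<in>Pow {..<m}. heads_prob p m X *
            (p m * of_bool (Y = insert m X) + (1 - p m) * of_bool (Y = X)))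
         = heads_prob p (Suc m) Y"
proof -
  have "(\<Sum>X\<in>Pow {..<m}. heads_prob p m X *
            (p m * of_bool (Y = insert m X) + (1 - p m) * of_bool (Y = X)))
      = (\<Sum>X\<in>Pow {..<m}. if X = Y - {m} then heads_prob p m X * (if m \<in> Y then p m else 1 - p m) else 0)"
    by (intro sum.cong) auto
  also have "\<dots> = heads_prob p m (Y - {m}) * (if m \<in> Y then p m else 1 - p m)"
    using assms by (subst sum.delta) (auto simp: less_Suc_eq)
  also have "heads_prob p m (Y - {m}) = heads_prob p m Y"
    by (rule heads_prob_cong) auto
  finally show ?thesis
    by (simp add: heads_prob_Suc)
qed

lemma has_output_dist_flip_all:
  assumes "\<forall>i<m. 0 \<le> p i \<and> p i \<le> 1"
  shows "has_output_dist (flip_all m) p (Pow {..<m}) (heads_prob p m)"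
  using assms
proof (induction m)
  case 0
  show ?case
    using has_output_dist_return_sampler[of "Pow {..<0::nat}" "{}" p]
    by (auto simp: heads_prob_def intro: has_output_dist_cong)
next
  case (Suc m)
  define g where "g X = (\<lambda>Y. p m * of_bool (Y = insert m X) + (1 - p m) * of_bool (Y = X))" for X
  have "has_output_dist (flip_all (Suc m)) p (Pow {..<Suc m}) (\<lambda>Y. \<Sum>X\<in>Pow {..<m}. heads_prob p m X * g X Y)"
    unfolding flip_all.simps
  proof (rule has_output_dist_bind)
    show "nonneg_steps (flip_all m) p"
      using Suc.prems by (intro nonneg_steps_if_wf[OF wf_sampler_flip_all]) auto
    show "nonneg_steps (bind_sampler (flip_coin m) (\<lambda>c. return_sampler (if c then insert m X else X))) p" for X
      using Suc.prems by (intro nonneg_steps_if_wf[where n="Suc m"] wf_sampler_bind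
          wf_sampler_coin_sampler wf_sampler_return_sampler) (auto simp: wf_act_def)
    show "has_output_dist (bind_sampler (flip_coin m) (\<lambda>c. return_sampler (if c then insert m X else X))) p
        (Pow {..<Suc m}) (g X)" if "X \<in> Pow {..<m}" for X
    proof -
      have "0 \<le> act_prob (Flip_coin m) p b" for b
        using Suc.prems by (intro act_prob_Flip_coin_nonneg) auto
      moreover have "insert m X \<in> Pow {..<Suc m}" "X \<in> Pow {..<Suc m}"
        using that by auto
      ultimately show ?thesis
        using has_output_dist_coin_return[of "Flip_coin m" p "Pow {..<Suc m}" "insert m X" X]
        by (simp add: g_def act_prob_def)
    qed
  qed (use Suc in auto)
  then show ?case
    by (rule has_output_dist_cong) (simp add: g_def sum_heads_prob_insert)
qed

definition tails_mass :: "(nat \<Rightarrow> real) \<Rightarrow> nat set \<Rightarrow> real" where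
  "tails_mass p X = (\<Sum>a\<in>X. 1 - p a)"

(* The guard a < n only keeps the sampler well-formed: uniform n never returns a >= n. *)
definition tails_test :: "nat \<Rightarrow> nat set \<Rightarrow> nat \<Rightarrow> nat option sampler" where
  "tails_test n X a =
     (if a \<in> X \<and> a < n then bind_sampler (flip_coin a) (\<lambda>c. return_sampler (if c then None else Some a))
      else return_sampler None)"

definition tails_round :: "nat \<Rightarrow> nat set \<Rightarrow> nat option sampler" where
  "tails_round n X = bind_sampler (uniform n) (tails_test n X)"

definition tails_choice :: "nat \<Rightarrow> nat set \<Rightarrow> nat sampler" where
  "tails_choice n X = retry (tails_round n X)"

lemma wf_sampler_tails_test: "wf_sampler n (tails_test n X a)"
  unfolding tails_test_def
  by (auto intro!: wf_sampler_bind wf_sampler_coin_sampler wf_sampler_return_sampler simp: wf_act_def)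

lemma wf_sampler_tails_round: "wf_sampler n (tails_round n X)"
  unfolding tails_round_def by (intro wf_sampler_bind wf_sampler_uniform wf_sampler_tails_test)

lemma tails_round_Nil: "0 < n \<Longrightarrow> \<not> is_return (tails_round n X [])"
  unfolding tails_round_def using uniform_Nil[of "n - 1"] by (simp add: bind_sampler_Nil)

lemma wf_sampler_tails_choice: "0 < n \<Longrightarrow> wf_sampler n (tails_choice n X)"
  unfolding tails_choice_def by (intro wf_sampler_retry wf_sampler_tails_round tails_round_Nil)

lemma returns_in_tails_round: "returns_in (tails_round n X) (insert None (Some ` X))"
  unfolding tails_round_def tails_test_def
  by (auto intro!: returns_in_bind[where A=UNIV] returns_in_return_sampler split: if_splits)

lemma returns_in_tails_choice: "0 < n \<Longrightarrow> returns_in (tails_choice n X) X"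
  unfolding tails_choice_def by (intro returns_in_retry returns_in_tails_round tails_round_Nil)

lemma has_output_dist_tails_test:
  assumes "a < n" "0 \<le> p a" "p a \<le> 1"
  shows "has_output_dist (tails_test n X a) p (insert None (Some ` {..<n}))
           (\<lambda>r. if a \<in> X then p a * of_bool (r = None) + (1 - p a) * of_bool (r = Some a) else of_bool (r = None))"
proof (cases "a \<in> X")
  case True
  have "0 \<le> act_prob (Flip_coin a :: bool act) p b" for b
    using assms by (intro act_prob_Flip_coin_nonneg)
  then show ?thesis
    using True assms(1) has_output_dist_coin_return[of "Flip_coin a" p "insert None (Some ` {..<n})" None "Some a"]
    by (simp add: tails_test_def act_prob_def)
qed (simp add: tails_test_def has_output_dist_return_sampler)

lemma sum_if_member_p_else_1:
  assumes "X \<subseteq> {..<n}"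
  shows "(\<Sum>a<n. if a \<in> X then p a else 1) = n - tails_mass p X"
proof -
  have "(\<Sum>a<n. if a \<in> X then p a else 1) = (\<Sum>a<n. 1 - (if a \<in> X then 1 - p a else 0))"
    by (intro sum.cong) auto
  then show ?thesis
    using assms by (simp add: sum_subtractf tails_mass_def sum.If_cases Int_absorb1)
qed

lemma has_output_dist_tails_round:
  assumes "0 < n" "\<forall>i<n. 0 \<le> p i \<and> p i \<le> 1" "X \<subseteq> {..<n}"
  shows "has_output_dist (tails_round n X) p (insert None (Some ` {..<n}))
           (\<lambda>r. case r of None \<Rightarrow> 1 - tails_mass p X / n | Some a \<Rightarrow> of_bool (a \<in> X) * (1 - p a) / n)"
proof -
  define g where "g a = (\<lambda>r. if a \<in> X then p a * of_bool (r = None) + (1 - p a) * of_bool (r = Some a)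
                              else of_bool (r = None))" for a
  have "has_output_dist (tails_round n X) p (insert None (Some ` {..<n})) (\<lambda>r. \<Sum>a<n. 1 / real n * g a r)"
    unfolding tails_round_def g_def using assms(1,2)
    by (intro has_output_dist_bind nonneg_steps_uniform has_output_dist_uniform has_output_dist_tails_test
        nonneg_steps_if_wf[OF wf_sampler_tails_test]) auto
  then show ?thesis
  proof (rule has_output_dist_cong)
    fix r assume r: "r \<in> insert None (Some ` {..<n})"
    show "(\<Sum>a<n. 1 / real n * g a r)
        = (case r of None \<Rightarrow> 1 - tails_mass p X / n | Some a \<Rightarrow> of_bool (a \<in> X) * (1 - p a) / n)"
    proof (cases r)
      case None
      have "(\<Sum>a<n. 1 / real n * g a r) = (\<Sum>a<n. if a \<in> X then p a else 1) / n"
        unfolding sum_divide_distrib by (intro sum.cong) (auto simp: None g_def)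
      then show ?thesis
        using assms(1,3) by (simp add: None sum_if_member_p_else_1 field_simps)
    next
      case (Some b)
      have "(\<Sum>a<n. 1 / real n * g a r) = (\<Sum>a<n. if a = b then of_bool (b \<in> X) * (1 - p b) / n else 0)"
        by (intro sum.cong) (auto simp: g_def Some)
      then show ?thesis
        using r by (auto simp: Some)
    qed
  qed
qed

lemma has_output_dist_tails_choice:
  assumes "0 < n" "\<forall>i<n. 0 \<le> p i \<and> p i \<le> 1" "X \<subseteq> {..<n}" "0 < tails_mass p X"
  shows "has_output_dist (tails_choice n X) p {..<n} (\<lambda>a. of_bool (a \<in> X) * (1 - p a) / tails_mass p X)"
proof -
  let ?f = "\<lambda>r. case r of None \<Rightarrow> 1 - tails_mass p X / n | Some a \<Rightarrow> of_bool (a \<in> X) * (1 - p a) / n"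
  have "has_output_dist (tails_choice n X) p {..<n} (\<lambda>a. ?f (Some a) / (1 - ?f None))"
    unfolding tails_choice_def
  proof (rule has_output_dist_retry)
    show "nonneg_steps (tails_round n X) p"
      using assms(2) by (rule nonneg_steps_if_wf[OF wf_sampler_tails_round])
  qed (use assms tails_round_Nil has_output_dist_tails_round in auto)
  then show ?thesis
    by (rule has_output_dist_cong) (use assms(1) in simp)
qed

section \<open>The swap sampler\<close>

definition ksubsets :: "nat \<Rightarrow> nat \<Rightarrow> nat set set" where
  "ksubsets n k = {U. U \<subseteq> {..<n} \<and> card U = k}"

lemma finite_ksubsets [simp]: "finite (ksubsets n k)"
  by (rule finite_subset[of _ "Pow {..<n}"]) (auto simp: ksubsets_def)

lemma ksubsets_subset: "X \<in> ksubsets n k \<Longrightarrow> X \<subseteq> {..<n}"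
  by (simp add: ksubsets_def)

lemma ksubsets_finite: "X \<in> ksubsets n k \<Longrightarrow> finite X"
  by (auto simp: ksubsets_def intro: finite_subset)

lemma ksubsets_swap:
  assumes "X \<in> ksubsets n k" "a \<in> X" "b \<notin> X" "b < n"
  shows "insert b (X - {a}) \<in> ksubsets n k"
proof -
  have "card (insert b (X - {a})) = Suc (card (X - {a}))"
    using ksubsets_finite[OF assms(1)] assms(3) by (intro card_insert_disjoint) auto
  also have "\<dots> = card X"
    using ksubsets_finite[OF assms(1)] assms(2) by (rule card_Suc_Diff1)
  finally show ?thesis
    using assms by (auto simp: ksubsets_def)
qed

lemma sum_ksubsets_eq_Pow: "(\<Sum>X\<in>ksubsets n k. f X) = (\<Sum>X\<in>Pow {..<n}. if card X = k then f X else 0)"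
proof -
  have "ksubsets n k = {X \<in> Pow {..<n}. card X = k}"
    by (auto simp: ksubsets_def)
  then show ?thesis
    by (simp only: sum.inter_filter finite_Pow_iff finite_lessThan)
qed

(* As in tails_test, the last branch (b >= n) only keeps the sampler well-formed. *)
definition swap_step :: "nat \<Rightarrow> nat \<Rightarrow> nat set \<Rightarrow> nat \<Rightarrow> nat set option sampler" where
  "swap_step n k X b =
     (if b \<in> X then bind_sampler (flip_aux (1 / real k)) (\<lambda>c. return_sampler (if c then Some X else None))
      else if b < n then bind_sampler (flip_coin b) (\<lambda>c.
        if c then bind_sampler (tails_choice n X) (\<lambda>a. return_sampler (Some (insert b (X - {a}))))
        else return_sampler None)
      else return_sampler None)"

definition swap_round :: "nat \<Rightarrow> nat \<Rightarrow> nat set option sampler" where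
  "swap_round n k = bind_sampler (flip_all n) (\<lambda>X.
     if card X = k then bind_sampler (uniform n) (swap_step n k X) else return_sampler None)"

definition swap_sampler :: "nat \<Rightarrow> nat \<Rightarrow> nat set sampler" where
  "swap_sampler n k = retry (swap_round n k)"

lemma wf_sampler_swap_step: "0 < n \<Longrightarrow> wf_sampler n (swap_step n k X b)"
  unfolding swap_step_def
  by (auto intro!: wf_sampler_bind wf_sampler_coin_sampler wf_sampler_return_sampler wf_sampler_tails_choice
      simp: wf_act_def divide_le_eq_1)

lemma wf_sampler_swap_round: "0 < n \<Longrightarrow> wf_sampler n (swap_round n k)"
  unfolding swap_round_def
  by (auto intro!: wf_sampler_bind wf_sampler_flip_all wf_sampler_uniform wf_sampler_return_sampler
      wf_sampler_swap_step)

lemma swap_round_Nil: "0 < n \<Longrightarrow> \<not> is_return (swap_round n k [])"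
  unfolding swap_round_def using flip_all_Nil[of "n - 1"] by (simp add: bind_sampler_Nil)

lemma wf_sampler_swap_sampler: "0 < n \<Longrightarrow> wf_sampler n (swap_sampler n k)"
  unfolding swap_sampler_def by (intro wf_sampler_retry wf_sampler_swap_round swap_round_Nil)

lemma returns_in_swap_round:
  assumes "0 < n"
  shows "returns_in (swap_round n k) (insert None (Some ` ksubsets n k))"
proof -
  have "returns_in (swap_step n k X b) (insert None (Some ` ksubsets n k))" if "X \<in> ksubsets n k" for X b
    unfolding swap_step_def using that assms
    by (auto intro!: returns_in_bind[where A=UNIV] returns_in_bind[OF returns_in_tails_choice]
        returns_in_return_sampler ksubsets_swap simp: inj_image_mem_iff)
  then show ?thesis
    unfolding swap_round_def
    by (auto intro!: returns_in_bind[OF returns_in_flip_all] returns_in_bind[where A=UNIV]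
        returns_in_return_sampler simp: ksubsets_def)
qed

lemma returns_in_swap_sampler: "0 < n \<Longrightarrow> returns_in (swap_sampler n k) (ksubsets n k)"
  unfolding swap_sampler_def by (intro returns_in_retry returns_in_swap_round swap_round_Nil)

definition step_dist :: "(nat \<Rightarrow> real) \<Rightarrow> nat \<Rightarrow> nat set \<Rightarrow> nat \<Rightarrow> nat set option \<Rightarrow> real" where
  "step_dist p k X b r =
     (if b \<in> X then of_bool (r = Some X) / k + (1 - 1 / k) * of_bool (r = None)
      else p b * (\<Sum>a\<in>X. (1 - p a) / tails_mass p X * of_bool (r = Some (insert b (X - {a}))))
        + (1 - p b) * of_bool (r = None))"

definition round_dist :: "(nat \<Rightarrow> real) \<Rightarrow> nat \<Rightarrow> nat \<Rightarrow> nat set option \<Rightarrow> real" where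
  "round_dist p n k r = (\<Sum>X\<in>Pow {..<n}. heads_prob p n X *
     (if card X = k then (\<Sum>b<n. step_dist p k X b r) / n else of_bool (r = None)))"

definition swap_triples :: "nat \<Rightarrow> nat \<Rightarrow> (nat set \<times> nat \<times> nat) set" where
  "swap_triples n k = (SIGMA X:ksubsets n k. X \<times> ({..<n} - X))"

lemma sum_swap_triples:
  "(\<Sum>t\<in>swap_triples n k. F t) = (\<Sum>X\<in>ksubsets n k. \<Sum>a\<in>X. \<Sum>b\<in>{..<n} - X. F (X, a, b))"
proof -
  have "(\<Sum>t\<in>swap_triples n k. F t) = (\<Sum>X\<in>ksubsets n k. \<Sum>ab\<in>X \<times> ({..<n} - X). F (X, ab))"
    unfolding swap_triples_def by (subst sum.Sigma) (auto dest: ksubsets_finite)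
  then show ?thesis
    by (simp add: sum.cartesian_product)
qed

lemma sum_swap_triples_exchange:
  "(\<Sum>(X, a, b)\<in>swap_triples n k. heads_prob p n X * ((1 - p a) * p b) * g a)
 = (\<Sum>(X, a, b)\<in>swap_triples n k. heads_prob p n X * ((1 - p a) * p b) * g b)"
proof -
  define \<sigma> :: "nat set \<times> nat \<times> nat \<Rightarrow> nat set \<times> nat \<times> nat"
    where "\<sigma> = (\<lambda>(X, a, b). (insert b (X - {a}), b, a))"
  have "\<sigma> (\<sigma> t) = t" "\<sigma> t \<in> swap_triples n k"
    "(case \<sigma> t of (X, a, b) \<Rightarrow> heads_prob p n X * ((1 - p a) * p b) * g b)
       = (case t of (X, a, b) \<Rightarrow> heads_prob p n X * ((1 - p a) * p b) * g a)"
    if "t \<in> swap_triples n k" for t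
  proof -
    obtain X a b where t: "t = (X, a, b)" "X \<in> ksubsets n k" "a \<in> X" "b < n" "b \<notin> X"
      using \<open>t \<in> swap_triples n k\<close> by (auto simp: swap_triples_def)
    then show "\<sigma> (\<sigma> t) = t" "\<sigma> t \<in> swap_triples n k"
      using ksubsets_subset[OF t(2)] by (auto simp: \<sigma>_def swap_triples_def ksubsets_swap insert_Diff_if)
    show "(case \<sigma> t of (X, a, b) \<Rightarrow> heads_prob p n X * ((1 - p a) * p b) * g b)
       = (case t of (X, a, b) \<Rightarrow> heads_prob p n X * ((1 - p a) * p b) * g a)"
      using t heads_prob_swap[of a X n b p] ksubsets_subset[OF t(2)] by (simp add: \<sigma>_def)
  qed
  then show ?thesis
    by (intro sum.reindex_bij_witness[where i=\<sigma> and j=\<sigma>]) auto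
qed

section \<open>Marginals of the swap sampler\<close>

locale marginals =
  fixes n k :: nat and p :: "nat \<Rightarrow> real"
  assumes k_pos: "0 < k" and k_less_n: "k < n"
    and p_range: "\<forall>i<n. 0 \<le> p i \<and> p i \<le> 1" and p_sum: "(\<Sum>i<n. p i) = real k"
begin

lemma n_pos: "0 < n"
  using k_pos k_less_n by simp

lemma sum_p_outside:
  assumes "X \<in> ksubsets n k"
  shows "(\<Sum>b\<in>{..<n} - X. p b) = tails_mass p X"
proof -
  have "(\<Sum>b\<in>{..<n} - X. p b) = real k - (\<Sum>b\<in>X. p b)"
    using assms p_sum by (simp add: ksubsets_def sum_diff)
  also have "\<dots> = tails_mass p X"
    using assms by (simp add: ksubsets_def tails_mass_def sum_subtractf)
  finally show ?thesis .
qed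

lemma p_le_tails_mass:
  assumes "X \<in> ksubsets n k" "b < n" "b \<notin> X"
  shows "p b \<le> tails_mass p X"
  unfolding sum_p_outside[OF assms(1), symmetric]
  using assms(2,3) p_range by (intro member_le_sum) auto

lemma tails_mass_nonneg: "X \<in> ksubsets n k \<Longrightarrow> 0 \<le> tails_mass p X"
  using p_range unfolding tails_mass_def by (intro sum_nonneg) (auto dest: ksubsets_subset)

lemma tails_mass_eq_0D:
  assumes "X \<in> ksubsets n k" "tails_mass p X = 0"
  shows "\<And>a. a \<in> X \<Longrightarrow> p a = 1" and "\<And>b. b \<in> {..<n} - X \<Longrightarrow> p b = 0"
proof -
  have X: "finite X" "X \<subseteq> {..<n}"
    using assms(1) by (auto simp: ksubsets_def intro: finite_subset)
  show "p a = 1" if "a \<in> X" for a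
    using assms(2) X that p_range unfolding tails_mass_def by (subst (asm) sum_nonneg_eq_0_iff) auto
  show "p b = 0" if "b \<in> {..<n} - X" for b
    using assms(2) that p_range unfolding sum_p_outside[OF assms(1), symmetric]
    by (subst (asm) sum_nonneg_eq_0_iff) auto
qed

(* When tails_mass p X = 0 the weights (1 - p a) / tails_mass p X vanish (x / 0 = 0); the two
   identities below survive because then p b = 0 outside X and p a = 1 inside X. *)
lemma sum_tails_weights:
  assumes "X \<in> ksubsets n k" "b \<in> {..<n} - X"
  shows "p b * (\<Sum>a\<in>X. (1 - p a) / tails_mass p X) = p b"
proof (cases "tails_mass p X = 0")
  case False
  then show ?thesis
    by (simp add: tails_mass_def flip: sum_divide_distrib)
qed (use assms tails_mass_eq_0D in simp)

lemma sum_outside_times_tails_weight: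
  assumes "X \<in> ksubsets n k" "i \<in> X"
  shows "(\<Sum>b\<in>{..<n} - X. p b) * ((1 - p i) / tails_mass p X) = 1 - p i"
  using assms tails_mass_eq_0D[OF assms(1)] by (cases "tails_mass p X = 0") (simp_all add: sum_p_outside)

lemma has_output_dist_swap_in:
  assumes X: "X \<in> ksubsets n k" and b: "b < n" "b \<notin> X" and pos: "0 < tails_mass p X"
  shows "has_output_dist (bind_sampler (tails_choice n X) (\<lambda>a. return_sampler (Some (insert b (X - {a})))))
           p (insert None (Some ` ksubsets n k))
           (\<lambda>r. \<Sum>a\<in>X. (1 - p a) / tails_mass p X * of_bool (r = Some (insert b (X - {a}))))"
proof -
  have "has_output_dist (bind_sampler (tails_choice n X) (\<lambda>a. return_sampler (Some (insert b (X - {a})))))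
      p (insert None (Some ` ksubsets n k))
      (\<lambda>r. \<Sum>a<n. of_bool (a \<in> X) * (1 - p a) / tails_mass p X * of_bool (r = Some (insert b (X - {a}))))"
    using X b pos n_pos p_range
    by (intro has_output_dist_bind has_output_dist_tails_choice nonneg_steps_return_sampler
        nonneg_steps_if_wf[OF wf_sampler_tails_choice] has_output_dist_return_sampler)
      (auto simp: inj_image_mem_iff intro: ksubsets_swap[OF X _ b(2,1)] dest: ksubsets_subset)
  moreover have "(\<Sum>a<n. of_bool (a \<in> X) * (1 - p a) / tails_mass p X * of_bool (r = Some (insert b (X - {a}))))
      = (\<Sum>a\<in>X. (1 - p a) / tails_mass p X * of_bool (r = Some (insert b (X - {a}))))" for r
  proof -
    have "(\<Sum>a<n. of_bool (a \<in> X) * (1 - p a) / tails_mass p X * of_bool (r = Some (insert b (X - {a}))))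
        = (\<Sum>a<n. of_bool (a \<in> X) * ((1 - p a) / tails_mass p X * of_bool (r = Some (insert b (X - {a})))))"
      by (intro sum.cong) auto
    then show ?thesis
      by (simp only: sum_of_bool_mult[OF _ ksubsets_subset[OF X]] finite_lessThan)
  qed
  ultimately show ?thesis
    by simp
qed

lemma has_output_dist_swap_step:
  assumes X: "X \<in> ksubsets n k" and b: "b < n"
  shows "has_output_dist (swap_step n k X b) p (insert None (Some ` ksubsets n k)) (step_dist p k X b)"
proof (cases "b \<in> X")
  case True
  have nonneg: "0 \<le> act_prob (Flip_aux (1 / real k) :: bool act) p c" for c
    using k_pos by (intro act_prob_Flip_aux_nonneg) simp_all
  have "has_output_dist (swap_step n k X b) p (insert None (Some ` ksubsets n k))
      (\<lambda>r. act_prob (Flip_aux (1 / real k) :: bool act) p True * of_bool (r = Some X)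
         + act_prob (Flip_aux (1 / real k) :: bool act) p False * of_bool (r = None))"
    unfolding swap_step_def if_P[OF True]
    by (rule has_output_dist_coin_return) (use X nonneg in simp_all)
  then show ?thesis
    by (rule has_output_dist_cong) (simp add: step_dist_def True act_prob_def)
next
  case bX: False
  define g where "g c = (if c then (\<lambda>r. \<Sum>a\<in>X. (1 - p a) / tails_mass p X
      * of_bool (r = Some (insert b (X - {a})))) else (\<lambda>r. of_bool (r = None)))" for c
  have "has_output_dist (swap_step n k X b) p (insert None (Some ` ksubsets n k))
      (\<lambda>r. act_prob (Flip_coin b :: bool act) p True * g True r
         + act_prob (Flip_coin b :: bool act) p False * g False r)"
    unfolding swap_step_def if_not_P[OF bX] if_P[OF b]
  proof (rule has_output_dist_bind_coin)
    show "has_output_dist (if c then bind_sampler (tails_choice n X) (\<lambda>a. return_sampler (Some (insert b (X - {a}))))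
        else return_sampler None) p (insert None (Some ` ksubsets n k)) (g c)"
      if "act_prob (Flip_coin b :: bool act) p c \<noteq> 0" for c
    proof (cases c)
      case True
      then have "0 < tails_mass p X"
        using that p_range b p_le_tails_mass[OF X b bX] by (auto simp: act_prob_def)
      with True show ?thesis
        using has_output_dist_swap_in[OF X b bX] by (simp add: g_def)
    qed (simp_all add: g_def has_output_dist_return_sampler)
  qed (use b p_range in \<open>auto intro: act_prob_Flip_coin_nonneg nonneg_steps_return_sampler
        nonneg_steps_bind nonneg_steps_if_wf[OF wf_sampler_tails_choice[OF n_pos]]\<close>)
  then show ?thesis
    by (rule has_output_dist_cong) (simp add: g_def step_dist_def bX act_prob_def)
qed

lemma has_output_dist_swap_round:
  "has_output_dist (swap_round n k) p (insert None (Some ` ksubsets n k)) (round_dist p n k)"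
  unfolding swap_round_def round_dist_def
proof (rule has_output_dist_bind[OF _ _ has_output_dist_flip_all])
  let ?T = "insert None (Some ` ksubsets n k)"
  show "has_output_dist (if card X = k then bind_sampler (uniform n) (swap_step n k X) else return_sampler None) p ?T
      (\<lambda>r. if card X = k then (\<Sum>b<n. step_dist p k X b r) / n else of_bool (r = None))"
    if "X \<in> Pow {..<n}" for X
  proof (cases "card X = k")
    case True
    then have "X \<in> ksubsets n k"
      using that by (simp add: ksubsets_def)
    then have "has_output_dist (bind_sampler (uniform n) (swap_step n k X)) p ?T
        (\<lambda>r. \<Sum>b<n. 1 / real n * step_dist p k X b r)"
      using n_pos p_range
      by (intro has_output_dist_bind nonneg_steps_uniform has_output_dist_uniform has_output_dist_swap_step
          nonneg_steps_if_wf[OF wf_sampler_swap_step]) auto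
    then show ?thesis
      using True by (simp add: sum_divide_distrib)
  qed (simp add: has_output_dist_return_sampler)
qed (use n_pos p_range in \<open>auto intro: nonneg_steps_if_wf wf_sampler_flip_all wf_sampler_uniform
      wf_sampler_swap_step wf_sampler_bind wf_sampler_return_sampler\<close>)

lemma sum_step_dist_None:
  assumes X: "X \<in> ksubsets n k"
  shows "(\<Sum>b<n. step_dist p k X b None) = real n - 1 - tails_mass p X"
proof -
  have "(\<Sum>b<n. step_dist p k X b None) = (\<Sum>b\<in>X. 1 - 1 / k) + (\<Sum>b\<in>{..<n} - X. 1 - p b)"
    using ksubsets_subset[OF X] by (simp add: step_dist_def sum.If_cases Int_absorb1 Diff_eq)
  also have "\<dots> = (real k - 1) + ((real n - real k) - tails_mass p X)"
  proof -
    have "finite X" "X \<subseteq> {..<n}" "card X = k"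
      using X by (auto simp: ksubsets_def intro: finite_subset)
    then have "card ({..<n} - X) = n - k"
      by (simp add: card_Diff_subset)
    then show ?thesis
      using X k_pos k_less_n by (simp add: ksubsets_def sum_subtractf of_nat_diff field_simps
          flip: sum_p_outside[OF X])
  qed
  finally show ?thesis
    by simp
qed

(* n times the contribution of the heads set X to the expectation of phi over successful rounds *)
definition step_moment :: "(nat set \<Rightarrow> real) \<Rightarrow> nat set \<Rightarrow> real" where
  "step_moment \<phi> X = (\<Sum>b<n. \<Sum>U\<in>ksubsets n k. step_dist p k X b (Some U) * \<phi> U)"

lemma step_moment_split:
  assumes X: "X \<in> ksubsets n k"
  shows "step_moment \<phi> X = \<phi> X
    + (\<Sum>b\<in>{..<n} - X. p b * (\<Sum>a\<in>X. (1 - p a) / tails_mass p X * \<phi> (insert b (X - {a}))))"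
proof -
  have inner: "(\<Sum>U\<in>ksubsets n k. step_dist p k X b (Some U) * \<phi> U)
      = (if b \<in> X then \<phi> X / k else p b * (\<Sum>a\<in>X. (1 - p a) / tails_mass p X * \<phi> (insert b (X - {a}))))"
    if "b < n" for b
  proof (cases "b \<in> X")
    case False
    let ?c = "\<lambda>a. p b * ((1 - p a) / tails_mass p X)"
    have "(\<Sum>U\<in>ksubsets n k. step_dist p k X b (Some U) * \<phi> U)
        = (\<Sum>U\<in>ksubsets n k. \<Sum>a\<in>X. ?c a * (of_bool (U = insert b (X - {a})) * \<phi> U))"
      by (intro sum.cong refl) (simp add: False step_dist_def sum_distrib_left sum_distrib_right mult_ac)
    also have "\<dots> = (\<Sum>a\<in>X. \<Sum>U\<in>ksubsets n k. ?c a * (of_bool (U = insert b (X - {a})) * \<phi> U))"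
      by (rule sum.swap)
    also have "\<dots> = (\<Sum>a\<in>X. ?c a * (\<Sum>U\<in>ksubsets n k. of_bool (U = insert b (X - {a})) * \<phi> U))"
      by (simp only: sum_distrib_left)
    also have "\<dots> = (\<Sum>a\<in>X. ?c a * \<phi> (insert b (X - {a})))"
      using ksubsets_swap[OF X _ False that] by (intro sum.cong) (simp_all add: sum_of_bool_eq_mult)
    finally show ?thesis
      using False by (simp add: sum_distrib_left mult.assoc)
  qed (use X in \<open>simp add: step_dist_def sum_of_bool_eq_mult flip: sum_divide_distrib\<close>)
  have "step_moment \<phi> X = (\<Sum>b\<in>X. \<phi> X / k)
      + (\<Sum>b\<in>{..<n} - X. p b * (\<Sum>a\<in>X. (1 - p a) / tails_mass p X * \<phi> (insert b (X - {a}))))"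
    using ksubsets_subset[OF X] by (simp add: step_moment_def inner sum.If_cases Int_absorb1 Diff_eq)
  then show ?thesis
    using X k_pos by (simp add: ksubsets_def)
qed

lemma step_moment_one:
  assumes "X \<in> ksubsets n k"
  shows "step_moment (\<lambda>_. 1) X = 1 + tails_mass p X"
proof -
  have "(\<Sum>b\<in>{..<n} - X. p b * (\<Sum>a\<in>X. (1 - p a) / tails_mass p X * 1)) = (\<Sum>b\<in>{..<n} - X. p b)"
    by (intro sum.cong) (simp_all add: sum_tails_weights[OF assms])
  then show ?thesis
    by (simp add: step_moment_split[OF assms] sum_p_outside[OF assms])
qed

lemma sum_swapped_out_weights:
  assumes X: "X \<in> ksubsets n k" and i: "i \<in> X"
  shows "(\<Sum>b\<in>{..<n} - X. p b * (\<Sum>a\<in>X. (1 - p a) / tails_mass p X * of_bool (i \<in> insert b (X - {a}))))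
       = tails_mass p X - (1 - p i)"
proof -
  let ?w = "\<lambda>a. (1 - p a) / tails_mass p X"
  have "(\<Sum>a\<in>X. ?w a * of_bool (i \<in> insert b (X - {a}))) = (\<Sum>a\<in>X. ?w a) - ?w i"
    if "b \<in> {..<n} - X" for b
  proof -
    have "(\<Sum>a\<in>X. ?w a * of_bool (i \<in> insert b (X - {a}))) = (\<Sum>a\<in>X - {i}. ?w a)"
      using that i ksubsets_finite[OF X] by (intro sum.mono_neutral_cong_right) auto
    then show ?thesis
      using i ksubsets_finite[OF X] by (simp add: sum_diff1)
  qed
  then have "(\<Sum>b\<in>{..<n} - X. p b * (\<Sum>a\<in>X. ?w a * of_bool (i \<in> insert b (X - {a}))))
      = (\<Sum>b\<in>{..<n} - X. p b * (\<Sum>a\<in>X. ?w a) - p b * ?w i)"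
    by (intro sum.cong) (simp_all add: right_diff_distrib)
  also have "\<dots> = (\<Sum>b\<in>{..<n} - X. p b * (\<Sum>a\<in>X. ?w a)) - (\<Sum>b\<in>{..<n} - X. p b) * ?w i"
    by (simp only: sum_subtractf sum_distrib_right)
  also have "(\<Sum>b\<in>{..<n} - X. p b * (\<Sum>a\<in>X. ?w a)) = (\<Sum>b\<in>{..<n} - X. p b)"
    by (intro sum.cong) (simp_all only: sum_tails_weights[OF X])
  also have "(\<Sum>b\<in>{..<n} - X. p b) - (\<Sum>b\<in>{..<n} - X. p b) * ?w i = tails_mass p X - (1 - p i)"
    using sum_outside_times_tails_weight[OF X i] sum_p_outside[OF X] by simp
  finally show ?thesis .
qed

lemma step_moment_member:
  assumes X: "X \<in> ksubsets n k" and i: "i < n"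
  shows "step_moment (\<lambda>U. of_bool (i \<in> U)) X = of_bool (i \<in> X) * tails_mass p X + p i"
proof (cases "i \<in> X")
  case True
  then show ?thesis
    by (simp only: step_moment_split[OF X] sum_swapped_out_weights[OF X True]) simp
next
  case False
  have "(\<Sum>b\<in>{..<n} - X. p b * (\<Sum>a\<in>X. (1 - p a) / tails_mass p X * of_bool (i \<in> insert b (X - {a}))))
      = (\<Sum>b\<in>{..<n} - X. if b = i then p b * (\<Sum>a\<in>X. (1 - p a) / tails_mass p X) else 0)"
    using False by (intro sum.cong) auto
  also have "\<dots> = p i"
    using False i X by (simp add: sum_tails_weights)
  finally show ?thesis
    using False by (simp add: step_moment_split[OF X])
qed

definition success_prob :: real where
  "success_prob = (\<Sum>X\<in>ksubsets n k. heads_prob p n X * (1 + tails_mass p X)) / n"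

lemma round_dist_None: "round_dist p n k None = 1 - success_prob"
proof -
  have "round_dist p n k None = (\<Sum>X\<in>Pow {..<n}. heads_prob p n X
      - (if card X = k then heads_prob p n X * (1 + tails_mass p X) else 0) / n)"
    unfolding round_dist_def
  proof (intro sum.cong refl)
    fix X assume "X \<in> Pow {..<n}"
    then show "heads_prob p n X * (if card X = k then (\<Sum>b<n. step_dist p k X b None) / n else of_bool (None = None))
        = heads_prob p n X - (if card X = k then heads_prob p n X * (1 + tails_mass p X) else 0) / n"
      using n_pos by (simp add: sum_step_dist_None ksubsets_def field_simps)
  qed
  also have "\<dots> = 1 - success_prob"
    unfolding sum_subtractf sum_heads_prob success_prob_def sum_ksubsets_eq_Pow
    by (simp add: sum_divide_distrib)
  finally show ?thesis .
qed

lemma round_dist_Some: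
  "round_dist p n k (Some U) = (\<Sum>X\<in>ksubsets n k. heads_prob p n X * (\<Sum>b<n. step_dist p k X b (Some U))) / n"
  unfolding round_dist_def sum_ksubsets_eq_Pow sum_divide_distrib
  by (intro sum.cong) (auto simp flip: sum_divide_distrib)

lemma sum_round_dist_Some:
  "(\<Sum>U\<in>ksubsets n k. round_dist p n k (Some U) * \<phi> U)
     = (\<Sum>X\<in>ksubsets n k. heads_prob p n X * step_moment \<phi> X) / n"
  unfolding round_dist_Some step_moment_def sum_divide_distrib sum_distrib_left sum_distrib_right
  by (subst sum.swap) (simp add: sum.swap[of _ "{..<n}"] mult.assoc)

lemma sum_heads_prob_tails_mass_member:
  assumes i: "i < n"
  shows "(\<Sum>X\<in>ksubsets n k. heads_prob p n X * tails_mass p X * of_bool (i \<in> X))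
       = p i * (\<Sum>X\<in>ksubsets n k. heads_prob p n X * tails_mass p X)"
proof -
  have "(\<Sum>(X, a, b)\<in>swap_triples n k. heads_prob p n X * ((1 - p a) * p b) * of_bool (a = i))
      = (\<Sum>X\<in>ksubsets n k. heads_prob p n X * tails_mass p X * of_bool (i \<in> X) * (1 - p i))"
    unfolding sum_swap_triples
  proof (intro sum.cong refl)
    fix X assume X: "X \<in> ksubsets n k"
    have "(\<Sum>a\<in>X. \<Sum>b\<in>{..<n} - X. heads_prob p n X * ((1 - p a) * p b) * of_bool (a = i))
        = (\<Sum>a\<in>X. of_bool (a = i) * (heads_prob p n X * (1 - p a))) * (\<Sum>b\<in>{..<n} - X. p b)"
      unfolding sum_product by (intro sum.cong refl) (simp add: mult_ac)
    also have "\<dots> = heads_prob p n X * tails_mass p X * of_bool (i \<in> X) * (1 - p i)"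
      by (simp add: sum_of_bool_eq_mult[OF ksubsets_finite[OF X]] sum_p_outside[OF X])
    finally show "(\<Sum>a\<in>X. \<Sum>b\<in>{..<n} - X. case (X, a, b) of (X, a, b) \<Rightarrow>
          heads_prob p n X * ((1 - p a) * p b) * of_bool (a = i))
        = heads_prob p n X * tails_mass p X * of_bool (i \<in> X) * (1 - p i)"
      by simp
  qed
  moreover have "(\<Sum>(X, a, b)\<in>swap_triples n k. heads_prob p n X * ((1 - p a) * p b) * of_bool (b = i))
      = (\<Sum>X\<in>ksubsets n k. heads_prob p n X * tails_mass p X * (1 - of_bool (i \<in> X)) * p i)"
    unfolding sum_swap_triples
  proof (intro sum.cong refl)
    fix X assume X: "X \<in> ksubsets n k"
    have "(\<Sum>a\<in>X. \<Sum>b\<in>{..<n} - X. heads_prob p n X * ((1 - p a) * p b) * of_bool (b = i))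
        = (\<Sum>a\<in>X. heads_prob p n X * (1 - p a)) * (\<Sum>b\<in>{..<n} - X. of_bool (b = i) * p b)"
      unfolding sum_product by (intro sum.cong refl) (simp add: mult_ac)
    also have "\<dots> = heads_prob p n X * tails_mass p X * (1 - of_bool (i \<in> X)) * p i"
      using i by (simp add: sum_of_bool_eq_mult tails_mass_def sum_distrib_left)
    finally show "(\<Sum>a\<in>X. \<Sum>b\<in>{..<n} - X. case (X, a, b) of (X, a, b) \<Rightarrow>
          heads_prob p n X * ((1 - p a) * p b) * of_bool (b = i))
        = heads_prob p n X * tails_mass p X * (1 - of_bool (i \<in> X)) * p i"
      by simp
  qed
  ultimately show ?thesis
    using sum_swap_triples_exchange[where g="\<lambda>j. of_bool (j = i)"]
    by (simp add: algebra_simps sum_subtractf sum_distrib_left)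
qed

lemma exists_ksubset_heads_prob_pos: "\<exists>X\<in>ksubsets n k. 0 < heads_prob p n X"
proof -
  define Ones where "Ones = {i. i < n \<and> p i = 1}"
  define Pos where "Pos = {i. i < n \<and> 0 < p i}"
  have Ones: "finite Ones" "Ones \<subseteq> Pos"
    by (auto simp: Ones_def Pos_def)
  have "real (card Ones) = (\<Sum>i\<in>Ones. p i)"
    by (simp add: Ones_def)
  also have "\<dots> \<le> real k"
    unfolding p_sum[symmetric] using p_range by (intro sum_mono2) (auto simp: Ones_def)
  finally have card_Ones: "card Ones \<le> k"
    by simp
  have "real k = (\<Sum>i\<in>Pos. p i)"
    unfolding p_sum[symmetric] using p_range
    by (intro sum.mono_neutral_right) (auto simp: Pos_def intro: antisym)
  also have "\<dots> \<le> real (card Pos)"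
    using p_range sum_mono[of Pos p "\<lambda>_. 1"] by (simp add: Pos_def)
  finally have "k - card Ones \<le> card (Pos - Ones)"
    using Ones by (simp add: card_Diff_subset)
  then obtain B where B: "B \<subseteq> Pos - Ones" "card B = k - card Ones" "finite B"
    by (rule obtain_subset_with_card_n)
  define X where "X = Ones \<union> B"
  have "Ones \<inter> B = {}"
    using B by blast
  then have "card X = k"
    using B Ones card_Ones by (simp add: X_def card_Un_disjoint)
  moreover have "X \<subseteq> Pos"
    using B Ones by (auto simp: X_def)
  moreover have "0 < heads_prob p n X"
    unfolding heads_prob_def
  proof (intro prod_pos)
    fix i assume "i \<in> {..<n}"
    then show "0 < (if i \<in> X then p i else 1 - p i)"
      using \<open>X \<subseteq> Pos\<close> p_range by (auto simp: Pos_def Ones_def X_def less_le)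
  qed
  ultimately show ?thesis
    by (auto simp: ksubsets_def Pos_def)
qed

lemma success_prob_pos: "0 < success_prob"
proof -
  obtain X where X: "X \<in> ksubsets n k" "0 < heads_prob p n X"
    using exists_ksubset_heads_prob_pos by blast
  have "0 < (\<Sum>X\<in>ksubsets n k. heads_prob p n X * (1 + tails_mass p X))"
    using X p_range tails_mass_nonneg
    by (intro sum_pos2[OF finite_ksubsets X(1)]) (auto intro!: mult_nonneg_nonneg heads_prob_nonneg
        simp: add_pos_nonneg)
  then show ?thesis
    using n_pos by (simp add: success_prob_def)
qed

theorem has_output_dist_swap_sampler:
  "has_output_dist (swap_sampler n k) p (ksubsets n k) (\<lambda>U. round_dist p n k (Some U) / success_prob)"
proof -
  have "has_output_dist (swap_sampler n k) p (ksubsets n k)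
      (\<lambda>U. round_dist p n k (Some U) / (1 - round_dist p n k None))"
    unfolding swap_sampler_def
    using n_pos p_range success_prob_pos
    by (intro has_output_dist_retry nonneg_steps_if_wf[OF wf_sampler_swap_round] swap_round_Nil
        has_output_dist_swap_round) (simp_all add: round_dist_None)
  then show ?thesis
    by (simp add: round_dist_None)
qed

lemma sum_swap_sampler_dist: "(\<Sum>U\<in>ksubsets n k. round_dist p n k (Some U) / success_prob) = 1"
proof -
  have "(\<Sum>U\<in>ksubsets n k. round_dist p n k (Some U)) = success_prob"
    using sum_round_dist_Some[of "\<lambda>_. 1"] by (simp add: step_moment_one success_prob_def)
  then show ?thesis
    using success_prob_pos by (simp flip: sum_divide_distrib)
qed

lemma sum_swap_sampler_dist_member:
  assumes "i < n"
  shows "(\<Sum>U\<in>ksubsets n k \<inter> {U. i \<in> U}. round_dist p n k (Some U) / success_prob) = p i"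
proof -
  have "(\<Sum>U\<in>ksubsets n k \<inter> {U. i \<in> U}. round_dist p n k (Some U))
      = (\<Sum>U\<in>ksubsets n k. round_dist p n k (Some U) * of_bool (i \<in> U))"
    by (simp add: sum.inter_restrict)
  also have "\<dots> = ((\<Sum>X\<in>ksubsets n k. heads_prob p n X * tails_mass p X * of_bool (i \<in> X))
      + p i * (\<Sum>X\<in>ksubsets n k. heads_prob p n X)) / n"
    unfolding sum_round_dist_Some sum_distrib_left sum.distrib[symmetric] using assms
    by (intro arg_cong[where f="\<lambda>x. x / _"] sum.cong) (simp_all add: step_moment_member algebra_simps)
  also have "\<dots> = p i * success_prob"
    unfolding sum_heads_prob_tails_mass_member[OF assms] success_prob_def
    by (simp add: sum.distrib algebra_simps flip: sum_distrib_left)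
  finally show ?thesis
    using success_prob_pos by (simp flip: sum_divide_distrib)
qed

end

definition to_action :: "nat set act \<Rightarrow> action" where
  "to_action a = (case a of Flip_coin i \<Rightarrow> Flip i | Flip_aux q \<Rightarrow> Aux q | Return U \<Rightarrow> Stop U)"

lemma to_action_eq_iff [simp]:
  "to_action a = Flip i \<longleftrightarrow> a = Flip_coin i"
  "to_action a = Aux q \<longleftrightarrow> a = Flip_aux q"
  "to_action a = Stop U \<longleftrightarrow> a = Return U"
  "is_stop (to_action a) \<longleftrightarrow> is_return a"
  by (cases a; simp add: to_action_def is_stop_def)+

lemma reach_prob_to_action: "reach_prob (\<lambda>h. to_action (P h)) p = path_weight P p"
proof -
  have "step_prob (\<lambda>h. to_action (P h)) p h b = act_prob (P h) p b" for h b
    by (cases "P h") (simp_all add: step_prob_def act_prob_def to_action_def)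
  then show ?thesis
    by (simp add: reach_prob_def path_weight_def fun_eq_iff)
qed

lemma wf_procedure_to_action:
  assumes "wf_sampler n P"
  shows "wf_procedure n (\<lambda>h. to_action (P h))"
  unfolding wf_procedure_def
proof (intro conjI allI impI)
  have wf: "wf_act n (P h)" for h
    using assms by (simp add: wf_sampler_def)
  show "i < n" if "to_action (P h) = Flip i" for h i
    using that wf[of h] by (simp add: wf_act_def)
  show "0 \<le> q" "q \<le> 1" if "to_action (P h) = Aux q" for h q
    using that wf[of h] by (simp_all add: wf_act_def)
qed

theorem theorem3:
  fixes n k :: nat
  assumes "1 \<le> k" and "k < n"
  shows "\<exists>\<sigma> :: procedure. wf_procedure n \<sigma> \<and>
     (\<forall>h U. \<sigma> h = Stop U \<longrightarrow> U \<subseteq> {..<n} \<and> card U = k) \<and>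
     (\<forall>p :: nat \<Rightarrow> real.
        (\<forall>i<n. 0 \<le> p i \<and> p i \<le> 1) \<and> (\<Sum>i<n. p i) = real k \<longrightarrow>
          (reach_prob \<sigma> p has_sum 1) {h. is_stop (\<sigma> h)} \<and>
          (\<forall>i<n. (reach_prob \<sigma> p has_sum p i) {h. \<exists>U. \<sigma> h = Stop U \<and> i \<in> U}))"
proof (intro exI conjI allI impI)
  have n: "0 < n"
    using assms by simp
  let ?\<sigma> = "\<lambda>h. to_action (swap_sampler n k h)"
  show "wf_procedure n ?\<sigma>"
    using n by (intro wf_procedure_to_action wf_sampler_swap_sampler)
  show "U \<subseteq> {..<n}" "card U = k" if "?\<sigma> h = Stop U" for h U
    using that returns_in_swap_sampler[OF n, of k] by (auto simp: returns_in_def ksubsets_def)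
  fix p :: "nat \<Rightarrow> real"
  assume "(\<forall>i<n. 0 \<le> p i \<and> p i \<le> 1) \<and> (\<Sum>i<n. p i) = real k"
  then interpret marginals n k p
    using assms by unfold_locales auto
  note dist = has_output_dist_has_sum[OF has_output_dist_swap_sampler]
  show "(reach_prob ?\<sigma> p has_sum 1) {h. is_stop (?\<sigma> h)}"
    using dist[of UNIV] sum_swap_sampler_dist by (simp add: reach_prob_to_action is_return_def)
  show "(reach_prob ?\<sigma> p has_sum p i) {h. \<exists>U. ?\<sigma> h = Stop U \<and> i \<in> U}" if "i < n" for i
    using dist[of "{U. i \<in> U}"] sum_swap_sampler_dist_member[OF that]
    by (simp add: reach_prob_to_action conj_commute)
qed

end
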